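(* Under the setting described in the context, the sequence $\{u_n\}_{n\in\mathbb{N}}$ is bounded in $L^\infty((0,T)\times(0,L))$ for every $T>0$.
   Context: $L>0$. $\Phi\in C(\mathbb{R})\cap C^1(\mathbb{R}\setminus\{\pm1\})$ is constant on $(-\infty,-1]$ and on $[1,\infty)$, convex on $[-1,1]$, decreasing on $[-1,0]$, increasing on $[0,1]$; $u_0\in H^1(0,L)$, $u_1\in L^2(0,L)$. Sequences $\{u_{0,n}\},\{u_{1,n}\}\subset C^\infty([0,L])$, $\{\Phi_n\}\subset C^\infty(\mathbb{R})$ satisfy: $u_{0,n}\to u_0$ in $H^1(0,L)$, $u_{1,n}\to u_1$ in $L^2(0,L)$, $\Phi_n\to\Phi$ uniformly on $\mathbb{R}$; $\Phi_n'\to\Phi'$ pointwise on $\mathbb{R}$ and uniformly on $\mathbb{R}\setminus((-1-\varepsilon,-1+\varepsilon)\cup(1-\varepsilon,1+\varepsilon))$ for every $\varepsilon>0$; $\Phi_n'(u)=0$ whenever $|u|\ge1+\varepsilon$ (any $\varepsilon>0$, all $n$); there is $C>0$ independent of $n$ with $\|u_{0,n}\|_{H^1}\le C$, $\|u_{1,n}\|_{L^2}\le C$, $0\le\Phi_n,\Phi_n'\le C$; and $u_{0,n}'(0)=u_{0,n}'(L)=u_{1,n}(0)=u_{1,n}(L)=0$. For each $n$, $u_n$ is the (global) classical solution of $\partial_{tt}^2 u_n=\partial_{xx}^2 u_n-\Phi_n'(u_n)$ for $t>0$, $0<x<L$, with $\partial_x u_n(t,0)=\partial_x u_n(t,L)=0$,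 $u_n(0,\cdot)=u_{0,n}$, $\partial_t u_n(0,\cdot)=u_{1,n}$. *)

theory Defs
  imports "HOL-Analysis.Analysis"
begin

definition smooth_on :: "real set \<Rightarrow> (real \<Rightarrow> real) \<Rightarrow> bool" where
  "smooth_on S f \<longleftrightarrow> (\<exists>D :: nat \<Rightarrow> real \<Rightarrow> real.
      (\<forall>x\<in>S. D 0 x = f x) \<and>
      (\<forall>k. \<forall>x\<in>S. (D k has_real_derivative D (Suc k) x) (at x within S)))"

definition in_L2 :: "real \<Rightarrow> (real \<Rightarrow> real) \<Rightarrow> bool" where
  "in_L2 L f \<longleftrightarrow> set_borel_measurable lborel {0<..<L} f \<and>
                  set_integrable lborel {0<..<L} (\<lambda>x. (f x)\<^sup>2)"

definition L2_norm :: "real \<Rightarrow> (real \<Rightarrow> real) \<Rightarrow> real" where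
  "L2_norm L f = sqrt (LINT x:{0<..<L}|lborel. (f x)\<^sup>2)"

definition test_fun :: "real \<Rightarrow> (real \<Rightarrow> real) \<Rightarrow> bool" where
  "test_fun L \<phi> \<longleftrightarrow> smooth_on UNIV \<phi> \<and> closure {x. \<phi> x \<noteq> 0} \<subseteq> {0<..<L}"

definition weak_deriv :: "real \<Rightarrow> (real \<Rightarrow> real) \<Rightarrow> (real \<Rightarrow> real) \<Rightarrow> bool" where
  "weak_deriv L f g \<longleftrightarrow> (\<forall>\<phi>. test_fun L \<phi> \<longrightarrow>
      (LINT x:{0<..<L}|lborel. f x * deriv \<phi> x) = - (LINT x:{0<..<L}|lborel. g x * \<phi> x))"

definition in_H1_with :: "real \<Rightarrow> (real \<Rightarrow> real) \<Rightarrow> (real \<Rightarrow> real) \<Rightarrow> bool" where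
  "in_H1_with L f g \<longleftrightarrow> in_L2 L f \<and> in_L2 L g \<and> weak_deriv L f g"

definition in_H1 :: "real \<Rightarrow> (real \<Rightarrow> real) \<Rightarrow> bool" where
  "in_H1 L f \<longleftrightarrow> (\<exists>g. in_H1_with L f g)"

text \<open>H1 norm of a function that is classically differentiable on (0,L).\<close>
definition H1_norm_smooth :: "real \<Rightarrow> (real \<Rightarrow> real) \<Rightarrow> real" where
  "H1_norm_smooth L f = sqrt (LINT x:{0<..<L}|lborel. (f x)\<^sup>2 + (deriv f x)\<^sup>2)"

definition H1_converges :: "real \<Rightarrow> (nat \<Rightarrow> real \<Rightarrow> real) \<Rightarrow> (real \<Rightarrow> real) \<Rightarrow> bool" where
  "H1_converges L fs f \<longleftrightarrow> (\<exists>g. in_H1_with L f g \<and>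
     (\<lambda>n. LINT x:{0<..<L}|lborel. (fs n x - f x)\<^sup>2 + (deriv (fs n) x - g x)\<^sup>2)
        \<longlonglongrightarrow> 0)"

definition L2_converges :: "real \<Rightarrow> (nat \<Rightarrow> real \<Rightarrow> real) \<Rightarrow> (real \<Rightarrow> real) \<Rightarrow> bool" where
  "L2_converges L fs f \<longleftrightarrow> (\<lambda>n. LINT x:{0<..<L}|lborel. (fs n x - f x)\<^sup>2) \<longlonglongrightarrow> 0"

definition classical_solution ::
  "real \<Rightarrow> (real \<Rightarrow> real) \<Rightarrow> (real \<Rightarrow> real) \<Rightarrow> (real \<Rightarrow> real) \<Rightarrow> (real \<Rightarrow> real \<Rightarrow> real) \<Rightarrow> bool" where
  "classical_solution L \<Psi> u0 u1 u \<longleftrightarrow>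
    (\<exists>ut ux utt uxx utx :: real \<Rightarrow> real \<Rightarrow> real.
      continuous_on ({0..} \<times> {0..L}) (\<lambda>p. u (fst p) (snd p)) \<and>
      continuous_on ({0..} \<times> {0..L}) (\<lambda>p. ut (fst p) (snd p)) \<and>
      continuous_on ({0..} \<times> {0..L}) (\<lambda>p. ux (fst p) (snd p)) \<and>
      (\<forall>t\<in>{0..}. \<forall>x\<in>{0..L}.
         ((\<lambda>s. u s x) has_real_derivative ut t x) (at t within {0..}) \<and>
         ((\<lambda>y. u t y) has_real_derivative ux t x) (at x within {0..L})) \<and>
      (\<forall>t\<in>{0<..}. \<forall>x\<in>{0<..<L}.
         ((\<lambda>s. ut s x) has_real_derivative utt t x) (at t) \<and>
         ((\<lambda>y. ux t y) has_real_derivative uxx t x) (at x) \<and>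
         ((\<lambda>y. ut t y) has_real_derivative utx t x) (at x) \<and>
         ((\<lambda>s. ux s x) has_real_derivative utx t x) (at t)) \<and>
      continuous_on ({0<..} \<times> {0<..<L}) (\<lambda>p. utt (fst p) (snd p)) \<and>
      continuous_on ({0<..} \<times> {0<..<L}) (\<lambda>p. uxx (fst p) (snd p)) \<and>
      continuous_on ({0<..} \<times> {0<..<L}) (\<lambda>p. utx (fst p) (snd p)) \<and>
      (\<forall>t\<in>{0<..}. \<forall>x\<in>{0<..<L}. utt t x = uxx t x - deriv \<Psi> (u t x)) \<and>
      (\<forall>t\<in>{0<..}. ux t 0 = 0 \<and> ux t L = 0) \<and>
      (\<forall>x\<in>{0..L}. u 0 x = u0 x \<and> ut 0 x = u1 x))"

end

theory Submission
  imports Defs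
begin

text \<open>The Riemann invariants \<open>u\<^sub>t + u\<^sub>x\<close> and \<open>u\<^sub>t - u\<^sub>x\<close> change along characteristics at the
  rate \<open>u\<^sub>t\<^sub>t - u\<^sub>x\<^sub>x = -\<Phi>\<^sub>n'(u)\<close>, which is bounded by \<open>C\<close>; the Neumann condition makes the two
  invariants agree at the boundary, so a characteristic can be followed back to time 0
  through reflections. Hence both invariants at \<open>(t,x)\<close> are bounded by
  \<open>|u\<^sub>1| + |u\<^sub>0'|\<close> at a reflected point plus \<open>C t\<close>. Integrating \<open>u\<^sub>t\<close> in time, the reflected
  initial data are integrated over finitely many periods, so \<open>|u(t,x) - u(0,x)|\<close> is controlled
  by the \<open>L\<^sup>1\<close> norms of \<open>u\<^sub>1\<close> and \<open>u\<^sub>0'\<close>, and \<open>|u(0,x)|\<close> by the \<open>H\<^sup>1\<close> norm of \<open>u\<^sub>0\<close>.\<close>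

lemma has_derivative_of_partials:
  fixes g gt gx :: "real \<Rightarrow> real \<Rightarrow> real"
  assumes S: "open S" "(t, x) \<in> S"
    and dt: "\<And>t x. (t, x) \<in> S \<Longrightarrow> ((\<lambda>s. g s x) has_real_derivative gt t x) (at t)"
    and dx: "\<And>t x. (t, x) \<in> S \<Longrightarrow> ((\<lambda>y. g t y) has_real_derivative gx t x) (at x)"
    and cont_gx: "continuous_on S (\<lambda>p. gx (fst p) (snd p))"
  shows "((\<lambda>p. g (fst p) (snd p)) has_derivative (\<lambda>h. gt t x * fst h + gx t x * snd h)) (at (t, x))"
proof -
  obtain A B where AB: "open A" "open B" "(t, x) \<in> A \<times> B" "A \<times> B \<subseteq> S"
    using open_prod_elim[OF S] by blast
  \<comment> \<open>\<open>has_derivative_partialsI\<close> needs a convex neighbourhood in the second variable.\<close>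
  obtain e where e: "e > 0" "ball x e \<subseteq> B"
    using AB openE by (metis mem_Sigma_iff)
  define Y where "Y = ball x e"
  have sub: "A \<times> Y \<subseteq> S" and opn: "open (A \<times> Y)" and in_AY: "(t, x) \<in> A \<times> Y"
    using AB e by (auto simp: Y_def open_Times)
  have fx: "((\<lambda>s. g s x) has_derivative (\<lambda>h. gt t x * h)) (at t within A)"
    using dt[OF S(2)] by (simp add: has_field_derivative_def has_derivative_at_withinI)
  have fy: "((\<lambda>y. g s y) has_derivative blinfun_apply (blinfun_mult_left (gx s y))) (at y within Y)"
    if "s \<in> A" "y \<in> Y" for s y
  proof -
    have "(s, y) \<in> S" using sub that by auto
    from dx[OF this] have "(g s has_derivative (\<lambda>h. h * gx s y)) (at y)"
      by (simp add: has_field_derivative_def mult.commute[of _ "gx s y"])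
    thus ?thesis by (simp add: has_derivative_at_withinI)
  qed
  have cy: "continuous (at (t, x) within A \<times> Y) (\<lambda>(s, y). blinfun_mult_left (gx s y))"
  proof -
    have "continuous_on (A \<times> Y) (\<lambda>p. gx (fst p) (snd p))"
      using cont_gx sub continuous_on_subset by blast
    hence "continuous_on (A \<times> Y) (\<lambda>p. blinfun_mult_left (gx (fst p) (snd p)))"
      by (intro bounded_linear.continuous_on[OF bounded_linear_blinfun_mult_left])
    hence "continuous_on (A \<times> Y) (\<lambda>(s, y). blinfun_mult_left (gx s y))"
      by (simp add: case_prod_beta)
    thus ?thesis
      using in_AY continuous_on_eq_continuous_within by blast
  qed
  have "((\<lambda>(s, y). g s y) has_derivative (\<lambda>(h, k). gt t x * h + blinfun_mult_left (gx t x) k))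
      (at (t, x) within A \<times> Y)"
    by (rule has_derivative_partialsI[OF fx fy cy]) (use in_AY Y_def in auto)
  hence "((\<lambda>(s, y). g s y) has_derivative (\<lambda>(h, k). gt t x * h + blinfun_mult_left (gx t x) k))
      (at (t, x))"
    using at_within_open[OF in_AY opn] by simp
  thus ?thesis
    unfolding case_prod_beta by (simp add: mult.commute)
qed

lemma has_real_derivative_along_line:
  fixes g :: "real \<Rightarrow> real \<Rightarrow> real"
  assumes "((\<lambda>p. g (fst p) (snd p)) has_derivative (\<lambda>h. A * fst h + B * snd h)) (at (t, c + k * t))"
  shows "((\<lambda>s. g s (c + k * s)) has_real_derivative (A + B * k)) (at t)"
proof -
  have line: "((\<lambda>s. (s, c + k * s)) has_derivative (\<lambda>h. (h, k * h))) (at t)"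
    by (auto intro!: derivative_eq_intros)
  have "((\<lambda>s. g s (c + k * s)) has_derivative (\<lambda>h. A * h + B * (k * h))) (at t)"
    using has_derivative_compose[OF line assms] by simp
  thus ?thesis unfolding has_field_derivative_def
    by (rule has_derivative_eq_rhs) (auto simp: algebra_simps)
qed

lemma LINT_greaterThanLessThan_eq_integral:
  fixes f :: "real \<Rightarrow> real"
  assumes "continuous_on {0..L} f"
  shows "(LINT x:{0<..<L}|lborel. f x) = integral {0..L} f"
proof -
  have "set_integrable lborel {0<..<L} f"
    by (rule set_integrable_subset[OF borel_integrable_atLeastAtMost'[OF assms]]) auto
  thus ?thesis
    using set_borel_integral_eq_integral(2) integral_open_interval_real[of 0 L f] by simp
qed

lemma integral_abs_le_square:
  fixes f :: "real \<Rightarrow> real"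
  assumes "continuous_on {0..L} f" "L \<ge> 0"
  shows "integral {0..L} (\<lambda>y. \<bar>f y\<bar>) \<le> (L + integral {0..L} (\<lambda>y. (f y)\<^sup>2)) / 2"
proof -
  have sq: "(\<lambda>y. (f y)\<^sup>2) integrable_on {0..L}"
    by (intro integrable_continuous_real continuous_intros assms)
  have "integral {0..L} (\<lambda>y. \<bar>f y\<bar>) \<le> integral {0..L} (\<lambda>y. ((f y)\<^sup>2 + 1) / 2)"
  proof (rule integral_le)
    show "\<bar>f y\<bar> \<le> ((f y)\<^sup>2 + 1) / 2" for y
      using sum_squares_ge_zero[of "\<bar>f y\<bar> - 1" 0] by (simp add: power2_eq_square algebra_simps)
  qed (auto intro!: integrable_continuous_real continuous_intros assms)
  also have "\<dots> = (integral {0..L} (\<lambda>y. (f y)\<^sup>2) + L) / 2"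
  proof (rule integral_unique)
    show "((\<lambda>y. ((f y)\<^sup>2 + 1) / 2) has_integral (integral {0..L} (\<lambda>y. (f y)\<^sup>2) + L) / 2) {0..L}"
      using has_integral_divide[OF has_integral_add[OF integrable_integral[OF sq]
          has_integral_const_real[of 1 0 L]]] assms(2) by simp
  qed
  finally show ?thesis by simp
qed

lemma abs_diff_le_integral_abs_deriv:
  fixes f f' :: "real \<Rightarrow> real"
  assumes deriv: "\<And>y. y \<in> {0..L} \<Longrightarrow> (f has_real_derivative f' y) (at y within {0..L})"
    and cont: "continuous_on {0..L} f'"
    and pq: "0 \<le> p" "p \<le> q" "q \<le> L"
  shows "\<bar>f q - f p\<bar> \<le> integral {0..L} (\<lambda>y. \<bar>f' y\<bar>)"
proof -
  have "(f' has_integral (f q - f p)) {p..q}"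
  proof (rule fundamental_theorem_of_calculus[OF pq(2)])
    fix y assume "y \<in> {p..q}"
    hence "(f has_real_derivative f' y) (at y within {0..L})"
      using deriv pq by auto
    hence "(f has_real_derivative f' y) (at y within {p..q})"
      by (rule DERIV_subset) (use pq in auto)
    thus "(f has_vector_derivative f' y) (at y within {p..q})"
      by (simp add: has_real_derivative_iff_has_vector_derivative)
  qed
  hence ftc: "f q - f p = integral {p..q} f'" "f' integrable_on {p..q}"
    by (auto simp: integral_unique has_integral_integrable)
  have abs_int: "(\<lambda>y. \<bar>f' y\<bar>) integrable_on {p..q}"
    using pq by (intro integrable_continuous_real continuous_intros continuous_on_subset[OF cont]) auto
  have "\<bar>f q - f p\<bar> \<le> integral {p..q} (\<lambda>y. \<bar>f' y\<bar>)"
    using integral_norm_bound_integral[OF ftc(2) abs_int] by (simp add: ftc(1))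
  also have "\<dots> \<le> integral {0..L} (\<lambda>y. \<bar>f' y\<bar>)"
    by (rule integral_subset_le[OF _ abs_int]) (use pq in \<open>auto intro!: integrable_continuous_real continuous_intros cont\<close>)
  finally show ?thesis .
qed

lemma abs_le_of_square_integrals:
  fixes f f' :: "real \<Rightarrow> real"
  assumes L: "L > 0"
    and deriv: "\<And>y. y \<in> {0..L} \<Longrightarrow> (f has_real_derivative f' y) (at y within {0..L})"
    and cont: "continuous_on {0..L} f" "continuous_on {0..L} f'"
    and energy: "integral {0..L} (\<lambda>y. (f y)\<^sup>2) \<le> E" "integral {0..L} (\<lambda>y. (f' y)\<^sup>2) \<le> E"
    and x: "x \<in> {0..L}"
  shows "\<bar>f x\<bar> \<le> (L + E) / (2 * L) + (L + E) / 2"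
proof -
  define I where "I = integral {0..L} (\<lambda>y. \<bar>f' y\<bar>)"
  have "\<bar>f x\<bar> \<le> \<bar>f y\<bar> + I" if "y \<in> {0..L}" for y
    using abs_diff_le_integral_abs_deriv[OF deriv cont(2), of x y]
      abs_diff_le_integral_abs_deriv[OF deriv cont(2), of y x] x that
    unfolding I_def by (cases "x \<le> y") auto
  hence "integral {0..L} (\<lambda>y. \<bar>f x\<bar>) \<le> integral {0..L} (\<lambda>y. \<bar>f y\<bar> + I)"
    by (intro integral_le) (auto intro!: integrable_continuous_real continuous_intros cont)
  hence "L * \<bar>f x\<bar> \<le> integral {0..L} (\<lambda>y. \<bar>f y\<bar> + I)"
    using L by simp
  also have "\<dots> = integral {0..L} (\<lambda>y. \<bar>f y\<bar>) + L * I"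
    using L by (subst integral_add) (auto intro!: integrable_continuous_real continuous_intros cont)
  also have "\<dots> \<le> (L + E) / 2 + L * ((L + E) / 2)"
    using integral_abs_le_square[OF cont(1)] integral_abs_le_square[OF cont(2)] energy L
    unfolding I_def by (intro add_mono mult_left_mono) auto
  finally show ?thesis
    using L by (simp add: field_simps)
qed

text \<open>\<open>zigzag L\<close> is the even, \<open>2L\<close>-periodic triangle wave that is the identity on \<open>[0,L]\<close>:
  following a characteristic backwards from \<open>(s,y)\<close> and reflecting it at \<open>x = 0\<close> and \<open>x = L\<close>,
  one reaches time 0 at \<open>zigzag L (y \<plusminus> s)\<close>.\<close>
definition zigzag :: "real \<Rightarrow> real \<Rightarrow> real" where
  "zigzag L w = L / pi * arccos (cos (pi * w / L))"

lemma zigzag_eq_self: "L > 0 \<Longrightarrow> 0 \<le> w \<Longrightarrow> w \<le> L \<Longrightarrow> zigzag L w = w"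
  unfolding zigzag_def by (simp add: arccos_cos divide_le_eq)

lemma zigzag_minus: "zigzag L (- w) = zigzag L w"
  unfolding zigzag_def by simp

lemma zigzag_reflect: "L > 0 \<Longrightarrow> zigzag L (2 * L - w) = zigzag L w"
proof -
  assume "L > 0"
  hence "pi * (2 * L - w) / L = 2 * pi - pi * w / L" by (simp add: field_simps)
  thus ?thesis unfolding zigzag_def by (simp add: cos_diff)
qed

lemma zigzag_periodic: "L > 0 \<Longrightarrow> zigzag L (w + real n * (2 * L)) = zigzag L w"
proof -
  assume "L > 0"
  hence "pi * (w + real n * (2 * L)) / L = pi * w / L + 2 * real n * pi"
    by (simp add: field_simps)
  thus ?thesis unfolding zigzag_def by (simp add: cos_add)
qed

lemma zigzag_in_interval: "L > 0 \<Longrightarrow> zigzag L w \<in> {0..L}"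
  using arccos_lbound[of "cos (pi * w / L)"] arccos_ubound[of "cos (pi * w / L)"]
  unfolding zigzag_def by (auto simp: divide_le_eq mult.commute)

lemma continuous_on_comp_zigzag:
  assumes "L > 0" "continuous_on {0..L} g"
  shows "continuous_on S (\<lambda>w. g (zigzag L w))"
proof (rule continuous_on_compose2[OF assms(2)])
  show "continuous_on S (zigzag L)"
    using assms(1) unfolding zigzag_def by (intro continuous_intros) auto
qed (use zigzag_in_interval[OF assms(1)] in auto)

lemma integral_comp_zigzag_periods:
  assumes L: "L > 0" and g: "continuous_on {0..L} g"
  shows "integral {- L..- L + real N * (2 * L)} (\<lambda>w. g (zigzag L w)) = real N * (2 * integral {0..L} g)"
proof -
  define h where "h w = g (zigzag L w)" for w
  have h_int: "h integrable_on {p..q}" for p q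
    unfolding h_def by (intro integrable_continuous_real continuous_on_comp_zigzag L g)
  have "integral {0..L} h = integral {0..L} g"
    by (rule integral_cong) (simp add: h_def zigzag_eq_self L)
  moreover have "integral {- L..0} h = integral {0..L} h"
  proof -
    have "((\<lambda>w. h (- w)) has_integral integral {- L..0} h) {0..L}"
      using has_integral_reflect_real[where f=h and a="-L" and b=0] h_int
      by (simp add: integrable_integral)
    moreover have "(\<lambda>w. h (- w)) = h"
      by (rule ext) (simp add: h_def zigzag_minus)
    ultimately show ?thesis
      by (simp add: integral_unique)
  qed
  moreover have "integral {- L..L} h = integral {- L..0} h + integral {0..L} h"
    using Henstock_Kurzweil_Integration.integral_combine[of "-L" 0 L h] L h_int by simp
  ultimately have period: "integral {- L..L} h = 2 * integral {0..L} g"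
    by simp
  show ?thesis
    unfolding h_def[symmetric]
  proof (induction N)
    case (Suc N)
    define c where "c = real N * (2 * L)"
    have "(\<lambda>w. h (w + c)) = h"
      by (rule ext) (simp add: h_def c_def zigzag_periodic L)
    hence "integral {- L + c..L + c} h = integral {- L..L} h"
      using integral_shift_real_ivl[of "- L + c" c "L + c" h] by simp
    moreover have "integral {- L..- L + real (Suc N) * (2 * L)} h
        = integral {- L..- L + c} h + integral {- L + c..L + c} h"
      using Henstock_Kurzweil_Integration.integral_combine[of "-L" "-L + c" "L + c" h] L h_int
      by (simp add: c_def algebra_simps)
    ultimately show ?case
      using Suc period by (simp add: c_def algebra_simps)
  qed simp
qed

lemma integral_comp_zigzag_le:
  assumes L: "L > 0" and g: "continuous_on {0..L} g" "\<And>y. y \<in> {0..L} \<Longrightarrow> g y \<ge> 0"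
    and pq: "- L \<le> p" "p \<le> q" "q \<le> - L + real N * (2 * L)"
  shows "integral {p..q} (\<lambda>w. g (zigzag L w)) \<le> real N * (2 * integral {0..L} g)"
proof -
  have "integral {p..q} (\<lambda>w. g (zigzag L w)) \<le> integral {- L..- L + real N * (2 * L)} (\<lambda>w. g (zigzag L w))"
    using pq g(2)[OF zigzag_in_interval[OF L]]
    by (intro integral_subset_le integrable_continuous_real continuous_on_comp_zigzag L g(1)) auto
  thus ?thesis
    using integral_comp_zigzag_periods[OF L g(1)] by simp
qed

lemma integral_comp_zigzag_translate_le:
  assumes L: "L > 0" and g: "continuous_on {0..L} g" "\<And>y. y \<in> {0..L} \<Longrightarrow> g y \<ge> 0"
    and x: "x \<in> {0..L}" and t: "0 \<le> t" "t + 2 * L \<le> real N * (2 * L)"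
  shows "integral {0..t} (\<lambda>s. g (zigzag L (x + s))) \<le> real N * (2 * integral {0..L} g)"
    and "integral {0..t} (\<lambda>s. g (zigzag L (x - s))) \<le> real N * (2 * integral {0..L} g)"
proof -
  have "integral {0..t} (\<lambda>s. g (zigzag L (x + s))) = integral {x..t + x} (\<lambda>w. g (zigzag L w))"
    using integral_shift_real_ivl[of x x "t + x" "\<lambda>w. g (zigzag L w)"] by (simp add: add.commute)
  thus "integral {0..t} (\<lambda>s. g (zigzag L (x + s))) \<le> real N * (2 * integral {0..L} g)"
    using integral_comp_zigzag_le[OF L g, of x "t + x" N] x t by simp
  have "integral {0..t} (\<lambda>s. g (zigzag L (x - s))) = integral {0..t} (\<lambda>s. g (zigzag L (s + - x)))"
    by (rule integral_cong) (metis zigzag_minus minus_diff_eq add_uminus_conv_diff)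
  also have "\<dots> = integral {- x..t + - x} (\<lambda>w. g (zigzag L w))"
    using integral_shift_real_ivl[of "- x" "- x" "t + - x" "\<lambda>w. g (zigzag L w)"] by simp
  finally show "integral {0..t} (\<lambda>s. g (zigzag L (x - s))) \<le> real N * (2 * integral {0..L} g)"
    using integral_comp_zigzag_le[OF L g, of "- x" "t + - x" N] x t by simp
qed

lemma abs_diff_le_of_deriv_bound:
  fixes \<phi> \<phi>' :: "real \<Rightarrow> real"
  assumes ab: "a \<le> b" and cont: "continuous_on {a..b} \<phi>"
    and deriv: "\<And>z. a < z \<Longrightarrow> z < b \<Longrightarrow> (\<phi> has_real_derivative \<phi>' z) (at z)"
    and bound: "\<And>z. a < z \<Longrightarrow> z < b \<Longrightarrow> \<bar>\<phi>' z\<bar> \<le> K"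
  shows "\<bar>\<phi> b - \<phi> a\<bar> \<le> K * (b - a)"
proof (cases "a = b")
  case False
  then obtain l z where z: "a < z" "z < b" "DERIV \<phi> z :> l" "\<phi> b - \<phi> a = (b - a) * l"
    using MVT[OF _ cont] deriv ab real_differentiable_def by (metis order_le_less)
  have "l = \<phi>' z" using DERIV_unique[OF z(3) deriv[OF z(1,2)]] .
  thus ?thesis
    using z(4) bound[OF z(1,2)] ab by (simp add: abs_mult mult.commute mult_right_mono)
qed simp

text \<open>The regularity of a classical solution, with the nonlinearity entering only through the
  bound \<open>C\<close> on \<open>u\<^sub>t\<^sub>t - u\<^sub>x\<^sub>x\<close>. The Neumann condition is only needed for \<open>t > 0\<close>: a
  characteristic traced back from a positive time meets the boundary at a positive time.\<close>
locale neumann_wave =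
  fixes L C :: real and u ut ux utt uxx utx :: "real \<Rightarrow> real \<Rightarrow> real"
  assumes L_pos: "L > 0" and C_nonneg: "C \<ge> 0"
    and cont_u: "continuous_on ({0..} \<times> {0..L}) (\<lambda>p. u (fst p) (snd p))"
    and cont_ut: "continuous_on ({0..} \<times> {0..L}) (\<lambda>p. ut (fst p) (snd p))"
    and cont_ux: "continuous_on ({0..} \<times> {0..L}) (\<lambda>p. ux (fst p) (snd p))"
    and deriv_u: "\<forall>t\<in>{0..}. \<forall>x\<in>{0..L}.
      ((\<lambda>s. u s x) has_real_derivative ut t x) (at t within {0..}) \<and>
      ((\<lambda>y. u t y) has_real_derivative ux t x) (at x within {0..L})"
    and deriv_ut_ux: "\<forall>t\<in>{0<..}. \<forall>x\<in>{0<..<L}.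
      ((\<lambda>s. ut s x) has_real_derivative utt t x) (at t) \<and>
      ((\<lambda>y. ux t y) has_real_derivative uxx t x) (at x) \<and>
      ((\<lambda>y. ut t y) has_real_derivative utx t x) (at x) \<and>
      ((\<lambda>s. ux s x) has_real_derivative utx t x) (at t)"
    and cont_uxx: "continuous_on ({0<..} \<times> {0<..<L}) (\<lambda>p. uxx (fst p) (snd p))"
    and cont_utx: "continuous_on ({0<..} \<times> {0<..<L}) (\<lambda>p. utx (fst p) (snd p))"
    and forcing_bound: "\<forall>t\<in>{0<..}. \<forall>x\<in>{0<..<L}. \<bar>utt t x - uxx t x\<bar> \<le> C"
    and neumann: "\<forall>t\<in>{0<..}. ux t 0 = 0 \<and> ux t L = 0"
begin

definition "riemann_plus t x = ut t x + ux t x"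
definition "riemann_minus t x = ut t x - ux t x"

lemma continuous_on_initial:
  "continuous_on {0..L} (u 0)" "continuous_on {0..L} (ut 0)" "continuous_on {0..L} (ux 0)"
proof -
  have slice: "(\<lambda>y. (0::real, y)) ` {0..L} \<subseteq> {0..} \<times> {0..L}" by auto
  have "continuous_on {0..L} (\<lambda>y. (0::real, y))" by (intro continuous_intros)
  thus "continuous_on {0..L} (u 0)" "continuous_on {0..L} (ut 0)" "continuous_on {0..L} (ux 0)"
    using continuous_on_compose2[OF cont_u _ slice] continuous_on_compose2[OF cont_ut _ slice]
      continuous_on_compose2[OF cont_ux _ slice] by auto
qed

lemma has_derivative_ut:
  "t > 0 \<Longrightarrow> x \<in> {0<..<L} \<Longrightarrow>
    ((\<lambda>p. ut (fst p) (snd p)) has_derivative (\<lambda>h. utt t x * fst h + utx t x * snd h)) (at (t, x))"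
  by (rule has_derivative_of_partials[of "{0<..} \<times> {0<..<L}"])
    (use deriv_ut_ux cont_utx in \<open>auto simp: open_Times\<close>)

lemma has_derivative_ux:
  "t > 0 \<Longrightarrow> x \<in> {0<..<L} \<Longrightarrow>
    ((\<lambda>p. ux (fst p) (snd p)) has_derivative (\<lambda>h. utx t x * fst h + uxx t x * snd h)) (at (t, x))"
  by (rule has_derivative_of_partials[of "{0<..} \<times> {0<..<L}"])
    (use deriv_ut_ux cont_uxx in \<open>auto simp: open_Times\<close>)

lemma riemann_plus_has_derivative_along_characteristic:
  assumes "t > 0" "c - t \<in> {0<..<L}"
  shows "((\<lambda>s. riemann_plus s (c - s)) has_real_derivative (utt t (c - t) - uxx t (c - t))) (at t)"
proof -
  have line: "c + (-1) * s = c - s" for s :: real by simp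
  have "((\<lambda>s. ut s (c + (-1) * s) + ux s (c + (-1) * s)) has_real_derivative
      (utt t (c - t) + utx t (c - t) * (-1)) + (utx t (c - t) + uxx t (c - t) * (-1))) (at t)"
    by (intro DERIV_add has_real_derivative_along_line)
      (use has_derivative_ut[OF assms] has_derivative_ux[OF assms] line in simp_all)
  thus ?thesis
    unfolding riemann_plus_def line by (rule DERIV_cong) simp
qed

lemma riemann_minus_has_derivative_along_characteristic:
  assumes "t > 0" "c + t \<in> {0<..<L}"
  shows "((\<lambda>s. riemann_minus s (c + s)) has_real_derivative (utt t (c + t) - uxx t (c + t))) (at t)"
proof -
  have line: "c + 1 * s = c + s" for s :: real by simp
  have "((\<lambda>s. ut s (c + 1 * s) - ux s (c + 1 * s)) has_real_derivative
      (utt t (c + t) + utx t (c + t) * 1) - (utx t (c + t) + uxx t (c + t) * 1)) (at t)"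
    by (intro DERIV_diff has_real_derivative_along_line)
      (use has_derivative_ut[OF assms] has_derivative_ux[OF assms] line in simp_all)
  thus ?thesis
    unfolding riemann_minus_def line by (rule DERIV_cong) simp
qed

lemma continuous_on_riemann_plus:
    "continuous_on ({0..} \<times> {0..L}) (\<lambda>p. riemann_plus (fst p) (snd p))"
  and continuous_on_riemann_minus:
    "continuous_on ({0..} \<times> {0..L}) (\<lambda>p. riemann_minus (fst p) (snd p))"
  unfolding riemann_plus_def riemann_minus_def by (intro continuous_intros cont_ut cont_ux)+

lemma riemann_plus_along_characteristic:
  assumes "0 \<le> s0" "s0 \<le> s1" "0 \<le> y" "y + (s1 - s0) \<le> L"
  shows "\<bar>riemann_plus s1 y - riemann_plus s0 (y + (s1 - s0))\<bar> \<le> C * (s1 - s0)"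
proof -
  define c where "c = y + s1"
  have "continuous_on {s0..s1} (\<lambda>s. (s, c - s))" by (intro continuous_intros)
  moreover have "(\<lambda>s. (s, c - s)) ` {s0..s1} \<subseteq> {0..} \<times> {0..L}"
    using assms by (auto simp: c_def)
  ultimately have "continuous_on {s0..s1} (\<lambda>s. riemann_plus s (c - s))"
    using continuous_on_compose2[OF continuous_on_riemann_plus, of "{s0..s1}" "\<lambda>s. (s, c - s)"] by simp
  hence "\<bar>riemann_plus s1 (c - s1) - riemann_plus s0 (c - s0)\<bar> \<le> C * (s1 - s0)"
    by (rule abs_diff_le_of_deriv_bound[OF assms(2) _ riemann_plus_has_derivative_along_characteristic])
      (use assms forcing_bound in \<open>auto simp: c_def\<close>)
  thus ?thesis
    by (simp add: c_def algebra_simps)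
qed

lemma riemann_minus_along_characteristic:
  assumes "0 \<le> s0" "s0 \<le> s1" "y \<le> L" "0 \<le> y - (s1 - s0)"
  shows "\<bar>riemann_minus s1 y - riemann_minus s0 (y - (s1 - s0))\<bar> \<le> C * (s1 - s0)"
proof -
  define c where "c = y - s1"
  have "continuous_on {s0..s1} (\<lambda>s. (s, c + s))" by (intro continuous_intros)
  moreover have "(\<lambda>s. (s, c + s)) ` {s0..s1} \<subseteq> {0..} \<times> {0..L}"
    using assms by (auto simp: c_def)
  ultimately have "continuous_on {s0..s1} (\<lambda>s. riemann_minus s (c + s))"
    using continuous_on_compose2[OF continuous_on_riemann_minus, of "{s0..s1}" "\<lambda>s. (s, c + s)"] by simp
  hence "\<bar>riemann_minus s1 (c + s1) - riemann_minus s0 (c + s0)\<bar> \<le> C * (s1 - s0)"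
    by (rule abs_diff_le_of_deriv_bound[OF assms(2) _ riemann_minus_has_derivative_along_characteristic])
      (use assms forcing_bound in \<open>auto simp: c_def\<close>)
  thus ?thesis
    by (simp add: c_def algebra_simps)
qed

lemma riemann_plus_eq_minus_at_boundary:
  "t > 0 \<Longrightarrow> riemann_plus t 0 = riemann_minus t 0 \<and> riemann_plus t L = riemann_minus t L"
  using neumann by (simp add: riemann_plus_def riemann_minus_def)

definition "initial_amplitude y = \<bar>ut 0 y\<bar> + \<bar>ux 0 y\<bar>"

definition "riemann_plus_bounded s \<longleftrightarrow>
  (\<forall>y\<in>{0..L}. \<bar>riemann_plus s y\<bar> \<le> initial_amplitude (zigzag L (y + s)) + C * s)"

definition "riemann_minus_bounded s \<longleftrightarrow>
  (\<forall>y\<in>{0..L}. \<bar>riemann_minus s y\<bar> \<le> initial_amplitude (zigzag L (y - s)) + C * s)"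

text \<open>One step of at most \<open>L\<close> in time: a characteristic through \<open>(s + h, y)\<close> either reaches time
  \<open>s\<close> inside \<open>[0,L]\<close>, or hits the boundary once at a time \<open>\<tau> > s\<close>, where the invariants
  are exchanged.\<close>
lemma riemann_plus_bounded_step:
  assumes "s \<ge> 0" "h \<in> {0..L}" "riemann_plus_bounded s" "riemann_minus_bounded s"
  shows "riemann_plus_bounded (s + h)"
  unfolding riemann_plus_bounded_def
proof
  fix y assume y: "y \<in> {0..L}"
  show "\<bar>riemann_plus (s + h) y\<bar> \<le> initial_amplitude (zigzag L (y + (s + h))) + C * (s + h)"
  proof (cases "y + h \<le> L")
    case True
    have "\<bar>riemann_plus (s + h) y - riemann_plus s (y + h)\<bar> \<le> C * h"
      using riemann_plus_along_characteristic[of s "s + h" y] assms y True by simp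
    moreover have "\<bar>riemann_plus s (y + h)\<bar> \<le> initial_amplitude (zigzag L (y + (s + h))) + C * s"
      using assms(3)[unfolded riemann_plus_bounded_def, rule_format, of "y + h"] assms(2) y True
      by (simp add: ac_simps)
    ultimately show ?thesis
      by (simp add: algebra_simps)
  next
    case False
    define \<tau> where "\<tau> = s + h - (L - y)"
    have "\<bar>riemann_plus (s + h) y - riemann_plus \<tau> L\<bar> \<le> C * (L - y)"
      using riemann_plus_along_characteristic[of \<tau> "s + h" y] assms y False by (simp add: \<tau>_def)
    moreover have "\<bar>riemann_minus \<tau> L - riemann_minus s (2 * L - h - y)\<bar> \<le> C * (\<tau> - s)"
      using riemann_minus_along_characteristic[of s \<tau> L] assms y False by (simp add: \<tau>_def algebra_simps)
    moreover have "\<bar>riemann_minus s (2 * L - h - y)\<bar>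
        \<le> initial_amplitude (zigzag L (2 * L - (y + (s + h)))) + C * s"
      using assms(4)[unfolded riemann_minus_bounded_def, rule_format, of "2 * L - h - y"] assms(2) y False
      by (simp add: algebra_simps)
    moreover have "riemann_plus \<tau> L = riemann_minus \<tau> L"
      using riemann_plus_eq_minus_at_boundary assms False by (simp add: \<tau>_def)
    ultimately show ?thesis
      using zigzag_reflect[OF L_pos] by (simp add: \<tau>_def algebra_simps)
  qed
qed

lemma riemann_minus_bounded_step:
  assumes "s \<ge> 0" "h \<in> {0..L}" "riemann_plus_bounded s" "riemann_minus_bounded s"
  shows "riemann_minus_bounded (s + h)"
  unfolding riemann_minus_bounded_def
proof
  fix y assume y: "y \<in> {0..L}"
  show "\<bar>riemann_minus (s + h) y\<bar> \<le> initial_amplitude (zigzag L (y - (s + h))) + C * (s + h)"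
  proof (cases "0 \<le> y - h")
    case True
    have "\<bar>riemann_minus (s + h) y - riemann_minus s (y - h)\<bar> \<le> C * h"
      using riemann_minus_along_characteristic[of s "s + h" y] assms y True by simp
    moreover have "\<bar>riemann_minus s (y - h)\<bar> \<le> initial_amplitude (zigzag L (y - (s + h))) + C * s"
      using assms(4)[unfolded riemann_minus_bounded_def, rule_format, of "y - h"] assms(2) y True
      by (simp add: diff_diff_eq add.commute)
    ultimately show ?thesis
      by (simp add: algebra_simps)
  next
    case False
    define \<tau> where "\<tau> = s + h - y"
    have "\<bar>riemann_minus (s + h) y - riemann_minus \<tau> 0\<bar> \<le> C * y"
      using riemann_minus_along_characteristic[of \<tau> "s + h" y] assms y False by (simp add: \<tau>_def)
    moreover have "\<bar>riemann_plus \<tau> 0 - riemann_plus s (h - y)\<bar> \<le> C * (\<tau> - s)"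
      using riemann_plus_along_characteristic[of s \<tau> 0] assms y False by (simp add: \<tau>_def algebra_simps)
    moreover have "\<bar>riemann_plus s (h - y)\<bar> \<le> initial_amplitude (zigzag L (y - (s + h))) + C * s"
      using assms(3)[unfolded riemann_plus_bounded_def, rule_format, of "h - y"] assms(2) y False
        zigzag_minus[of L "y - (s + h)"] by (simp add: algebra_simps)
    moreover have "riemann_plus \<tau> 0 = riemann_minus \<tau> 0"
      using riemann_plus_eq_minus_at_boundary assms y False by (simp add: \<tau>_def)
    ultimately show ?thesis
      by (simp add: \<tau>_def algebra_simps)
  qed
qed

lemma riemann_bounded:
  assumes "s \<ge> 0"
  shows "riemann_plus_bounded s" "riemann_minus_bounded s"
proof -
  have "\<forall>s\<in>{0..real k * L}. riemann_plus_bounded s \<and> riemann_minus_bounded s" for k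
  proof (induction k)
    case 0
    show ?case
      using zigzag_eq_self[OF L_pos]
      by (simp add: riemann_plus_bounded_def riemann_minus_bounded_def riemann_plus_def
          riemann_minus_def initial_amplitude_def abs_triangle_ineq abs_triangle_ineq4)
  next
    case (Suc k)
    show ?case
    proof
      fix s assume s: "s \<in> {0..real (Suc k) * L}"
      show "riemann_plus_bounded s \<and> riemann_minus_bounded s"
      proof (cases "s \<le> real k * L")
        case False
        define s' where "s' = real k * L"
        have step: "s' \<ge> 0" "s - s' \<in> {0..L}" "riemann_plus_bounded s'" "riemann_minus_bounded s'"
          using False s Suc.IH L_pos by (auto simp: s'_def algebra_simps)
        show ?thesis
          using riemann_plus_bounded_step[OF step] riemann_minus_bounded_step[OF step] by simp
      qed (use Suc s in auto)
    qed
  qed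
  moreover obtain k :: nat where "s / L \<le> k"
    using real_arch_simple by blast
  ultimately show "riemann_plus_bounded s" "riemann_minus_bounded s"
    using assms L_pos by (auto simp: divide_le_eq)
qed

lemma abs_ut_le:
  assumes "s \<ge> 0" "x \<in> {0..L}"
  shows "\<bar>ut s x\<bar>
    \<le> (initial_amplitude (zigzag L (x + s)) + initial_amplitude (zigzag L (x - s))) / 2 + C * s"
proof -
  have "\<bar>riemann_plus s x\<bar> \<le> initial_amplitude (zigzag L (x + s)) + C * s"
    "\<bar>riemann_minus s x\<bar> \<le> initial_amplitude (zigzag L (x - s)) + C * s"
    using riemann_bounded[OF assms(1)] assms(2)
    unfolding riemann_plus_bounded_def riemann_minus_bounded_def by auto
  moreover have "ut s x = (riemann_plus s x + riemann_minus s x) / 2"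
    by (simp add: riemann_plus_def riemann_minus_def)
  ultimately show ?thesis
    by (simp add: abs_le_iff field_simps) linarith
qed

lemma continuous_on_initial_amplitude: "continuous_on {0..L} initial_amplitude"
  unfolding initial_amplitude_def by (intro continuous_intros continuous_on_initial)

lemma integral_initial_amplitude_le:
  assumes "integral {0..L} (\<lambda>y. (ut 0 y)\<^sup>2) \<le> E" "integral {0..L} (\<lambda>y. (ux 0 y)\<^sup>2) \<le> E"
  shows "integral {0..L} initial_amplitude \<le> L + E"
proof -
  have "integral {0..L} initial_amplitude
      = integral {0..L} (\<lambda>y. \<bar>ut 0 y\<bar>) + integral {0..L} (\<lambda>y. \<bar>ux 0 y\<bar>)"
    unfolding initial_amplitude_def
    by (intro integral_add integrable_continuous_real continuous_intros continuous_on_initial)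
  also have "\<dots> \<le> (L + E) / 2 + (L + E) / 2"
    using integral_abs_le_square[OF continuous_on_initial(2)] integral_abs_le_square[OF continuous_on_initial(3)]
      assms L_pos by (intro add_mono) (auto intro: order_trans)
  finally show ?thesis by simp
qed

lemma abs_le_initial_plus_integral_initial_amplitude:
  assumes t: "t \<ge> 0" "t + 2 * L \<le> real N * (2 * L)" and x: "x \<in> {0..L}"
  shows "\<bar>u t x\<bar> \<le> \<bar>u 0 x\<bar> + real N * (2 * integral {0..L} initial_amplitude) + C * t * t"
proof -
  define A where "A s = initial_amplitude (zigzag L (x + s))" for s
  define B where "B s = initial_amplitude (zigzag L (x - s))" for s
  have int_AB: "A integrable_on {0..t}" "B integrable_on {0..t}"
    unfolding A_def B_def using L_pos continuous_on_initial_amplitude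
    by (auto intro!: integrable_continuous_real continuous_on_compose2[OF continuous_on_comp_zigzag]
        continuous_intros)
  have "((\<lambda>s. ut s x) has_integral (u t x - u 0 x)) {0..t}"
  proof (rule fundamental_theorem_of_calculus[OF t(1)])
    fix s assume "s \<in> {0..t}"
    hence "((\<lambda>s. u s x) has_real_derivative ut s x) (at s within {0..})"
      using deriv_u x by auto
    hence "((\<lambda>s. u s x) has_real_derivative ut s x) (at s within {0..t})"
      by (rule DERIV_subset) auto
    thus "((\<lambda>s. u s x) has_vector_derivative ut s x) (at s within {0..t})"
      by (simp add: has_real_derivative_iff_has_vector_derivative)
  qed
  hence ftc: "u t x - u 0 x = integral {0..t} (\<lambda>s. ut s x)" "(\<lambda>s. ut s x) integrable_on {0..t}"
    by (auto simp: integral_unique has_integral_integrable)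
  have "\<bar>ut s x\<bar> \<le> (A s + B s) / 2 + C * t" if "s \<in> {0..t}" for s
    using abs_ut_le[of s x] mult_left_mono[of s t C] C_nonneg x that by (auto simp: A_def B_def)
  hence "\<bar>u t x - u 0 x\<bar> \<le> integral {0..t} (\<lambda>s. (A s + B s) / 2 + C * t)"
    using integral_norm_bound_integral[OF ftc(2), of "\<lambda>s. (A s + B s) / 2 + C * t"] int_AB
    by (simp add: ftc(1) integrable_add integrable_divide integrable_const_ivl)
  also have "\<dots> = (integral {0..t} A + integral {0..t} B) / 2 + C * t * t"
    using has_integral_add[OF has_integral_divide[OF has_integral_add[OF
        integrable_integral[OF int_AB(1)] integrable_integral[OF int_AB(2)]]] has_integral_const_real[of "C * t" 0 t]] t
    by (simp add: integral_unique mult.commute)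
  also have "\<dots> \<le> real N * (2 * integral {0..L} initial_amplitude) + C * t * t"
  proof -
    have "\<And>y. 0 \<le> initial_amplitude y" by (simp add: initial_amplitude_def)
    from integral_comp_zigzag_translate_le[OF L_pos continuous_on_initial_amplitude this x t]
    show ?thesis unfolding A_def[abs_def] B_def[abs_def] by (simp add: field_simps)
  qed
  finally show ?thesis by simp
qed

lemma abs_le_of_initial_energy:
  assumes energy: "integral {0..L} (\<lambda>y. (u 0 y)\<^sup>2) \<le> E" "integral {0..L} (\<lambda>y. (ux 0 y)\<^sup>2) \<le> E"
      "integral {0..L} (\<lambda>y. (ut 0 y)\<^sup>2) \<le> E"
    and t: "t \<ge> 0" "t + 2 * L \<le> real N * (2 * L)" and x: "x \<in> {0..L}"
  shows "\<bar>u t x\<bar> \<le> (L + E) / (2 * L) + (L + E) / 2 + real N * (2 * (L + E)) + C * t * t"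
proof -
  have "\<bar>u 0 x\<bar> \<le> (L + E) / (2 * L) + (L + E) / 2"
    using deriv_u by (intro abs_le_of_square_integrals[OF L_pos _ continuous_on_initial(1,3) energy(1,2) x]) auto
  moreover have "real N * (2 * integral {0..L} initial_amplitude) \<le> real N * (2 * (L + E))"
    using integral_initial_amplitude_le[OF energy(3,2)] by (intro mult_left_mono) auto
  ultimately show ?thesis
    using abs_le_initial_plus_integral_initial_amplitude[OF t x] by linarith
qed

end

lemma classical_solution_abs_le:
  assumes L: "L > 0" and forcing: "\<And>v. \<bar>deriv \<Psi> v\<bar> \<le> C"
    and sol: "classical_solution L \<Psi> u0 u1 u"
    and energy: "(LINT y:{0<..<L}|lborel. (u0 y)\<^sup>2 + (deriv u0 y)\<^sup>2) \<le> E"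
      "(LINT y:{0<..<L}|lborel. (u1 y)\<^sup>2) \<le> E"
    and t: "t \<ge> 0" "t + 2 * L \<le> real N * (2 * L)" and x: "x \<in> {0..L}"
  shows "\<bar>u t x\<bar> \<le> (L + E) / (2 * L) + (L + E) / 2 + real N * (2 * (L + E)) + C * t * t"
proof -
  obtain ut ux utt uxx utx :: "real \<Rightarrow> real \<Rightarrow> real" where
    cont: "continuous_on ({0..} \<times> {0..L}) (\<lambda>p. u (fst p) (snd p))"
      "continuous_on ({0..} \<times> {0..L}) (\<lambda>p. ut (fst p) (snd p))"
      "continuous_on ({0..} \<times> {0..L}) (\<lambda>p. ux (fst p) (snd p))"
    and deriv1: "\<forall>t\<in>{0..}. \<forall>x\<in>{0..L}.
      ((\<lambda>s. u s x) has_real_derivative ut t x) (at t within {0..}) \<and>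
      ((\<lambda>y. u t y) has_real_derivative ux t x) (at x within {0..L})"
    and deriv2: "\<forall>t\<in>{0<..}. \<forall>x\<in>{0<..<L}.
      ((\<lambda>s. ut s x) has_real_derivative utt t x) (at t) \<and>
      ((\<lambda>y. ux t y) has_real_derivative uxx t x) (at x) \<and>
      ((\<lambda>y. ut t y) has_real_derivative utx t x) (at x) \<and>
      ((\<lambda>s. ux s x) has_real_derivative utx t x) (at t)"
    and cont2: "continuous_on ({0<..} \<times> {0<..<L}) (\<lambda>p. uxx (fst p) (snd p))"
      "continuous_on ({0<..} \<times> {0<..<L}) (\<lambda>p. utx (fst p) (snd p))"
    and equation: "\<forall>t\<in>{0<..}. \<forall>x\<in>{0<..<L}. utt t x = uxx t x - deriv \<Psi> (u t x)"
    and bc: "\<forall>t\<in>{0<..}. ux t 0 = 0 \<and> ux t L = 0"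
    and initial: "\<forall>y\<in>{0..L}. u 0 y = u0 y \<and> ut 0 y = u1 y"
    using sol unfolding classical_solution_def by blast
  interpret neumann_wave L C u ut ux utt uxx utx
    using L order_trans[OF abs_ge_zero forcing] cont deriv1 deriv2 cont2 equation forcing bc
    by unfold_locales auto
  have deriv_u0: "deriv u0 y = ux 0 y" if "y \<in> {0<..<L}" for y
  proof (rule DERIV_imp_deriv)
    have "((\<lambda>z. u 0 z) has_real_derivative ux 0 y) (at y within {0..L})"
      using deriv_u that by auto
    hence "((\<lambda>z. u 0 z) has_real_derivative ux 0 y) (at y)"
      using at_within_Icc_at[of 0 y L] that by simp
    thus "(u0 has_real_derivative ux 0 y) (at y)"
      by (rule has_field_derivative_transform_within_open[of _ _ _ "{0<..<L}"]) (use that initial in auto)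
  qed
  have "integral {0..L} (\<lambda>y. (u 0 y)\<^sup>2 + (ux 0 y)\<^sup>2) = (LINT y:{0<..<L}|lborel. (u 0 y)\<^sup>2 + (ux 0 y)\<^sup>2)"
    by (intro LINT_greaterThanLessThan_eq_integral[symmetric] continuous_intros continuous_on_initial)
  also have "\<dots> = (LINT y:{0<..<L}|lborel. (u0 y)\<^sup>2 + (deriv u0 y)\<^sup>2)"
    by (rule set_lebesgue_integral_cong) (use initial deriv_u0 in auto)
  finally have H1: "integral {0..L} (\<lambda>y. (u 0 y)\<^sup>2) + integral {0..L} (\<lambda>y. (ux 0 y)\<^sup>2) \<le> E"
    using energy(1) by (subst integral_add[symmetric])
      (auto intro!: integrable_continuous_real continuous_intros continuous_on_initial)
  have "integral {0..L} (\<lambda>y. (ut 0 y)\<^sup>2) = (LINT y:{0<..<L}|lborel. (ut 0 y)\<^sup>2)"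
    by (intro LINT_greaterThanLessThan_eq_integral[symmetric] continuous_intros continuous_on_initial)
  also have "\<dots> = (LINT y:{0<..<L}|lborel. (u1 y)\<^sup>2)"
    by (rule set_lebesgue_integral_cong) (use initial in auto)
  finally have L2: "integral {0..L} (\<lambda>y. (ut 0 y)\<^sup>2) \<le> E"
    using energy(2) by simp
  have "integral {0..L} (\<lambda>y. (f y)\<^sup>2) \<ge> 0" if "continuous_on {0..L} f" for f :: "real \<Rightarrow> real"
    by (rule integral_nonneg) (use integrable_continuous_real continuous_on_power[OF that] in auto)
  thus ?thesis
    using H1 L2 continuous_on_initial
    by (intro abs_le_of_initial_energy t x) fastforce+
qed


theorem lemma3p5:
  fixes L C :: real
    and \<Phi> u0 u1 :: "real \<Rightarrow> real"
    and u0s u1s \<Phi>s :: "nat \<Rightarrow> real \<Rightarrow> real"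
    and u :: "nat \<Rightarrow> real \<Rightarrow> real \<Rightarrow> real"
  assumes L_pos: "L > 0"
    and Phi_cont: "continuous_on UNIV \<Phi>"
    and Phi_diff: "\<forall>x. x \<notin> {-1, 1} \<longrightarrow> \<Phi> differentiable (at x)"
    and Phi_C1: "continuous_on (UNIV - {-1, 1}) (deriv \<Phi>)"
    and Phi_const_left: "\<forall>x \<le> -1. \<Phi> x = \<Phi> (-1)"
    and Phi_const_right: "\<forall>x \<ge> 1. \<Phi> x = \<Phi> 1"
    and Phi_convex: "convex_on {-1..1} \<Phi>"
    and Phi_decr: "antimono_on {-1..0} \<Phi>"
    and Phi_incr: "mono_on {0..1} \<Phi>"
    and u0_H1: "in_H1 L u0"
    and u1_L2: "in_L2 L u1"
    and u0s_smooth: "\<forall>n. smooth_on {0..L} (u0s n)"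
    and u1s_smooth: "\<forall>n. smooth_on {0..L} (u1s n)"
    and Phis_smooth: "\<forall>n. smooth_on UNIV (\<Phi>s n)"
    and u0s_conv: "H1_converges L u0s u0"
    and u1s_conv: "L2_converges L u1s u1"
    and Phis_unif: "uniform_limit UNIV \<Phi>s \<Phi> sequentially"
    and dPhis_pointwise: "\<forall>x. x \<notin> {-1, 1} \<longrightarrow> (\<lambda>n. deriv (\<Phi>s n) x) \<longlonglongrightarrow> deriv \<Phi> x"
    and dPhis_unif: "\<forall>\<epsilon>>0. uniform_limit
           (UNIV - ({-1-\<epsilon><..<-1+\<epsilon>} \<union> {1-\<epsilon><..<1+\<epsilon>}))
           (\<lambda>n. deriv (\<Phi>s n)) (deriv \<Phi>) sequentially"
    and dPhis_zero: "\<forall>\<epsilon>>0. \<forall>n. \<forall>v. \<bar>v\<bar> \<ge> 1 + \<epsilon> \<longrightarrow> deriv (\<Phi>s n) v = 0"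
    and C_pos: "C > 0"
    and u0s_bound: "\<forall>n. H1_norm_smooth L (u0s n) \<le> C"
    and u1s_bound: "\<forall>n. L2_norm L (u1s n) \<le> C"
    and Phis_bound: "\<forall>n. \<forall>v. 0 \<le> \<Phi>s n v \<and> \<Phi>s n v \<le> C"
    and dPhis_bound: "\<forall>n. \<forall>v. \<bar>deriv (\<Phi>s n) v\<bar> \<le> C"
    and u0s_bc: "\<forall>n. ((u0s n) has_real_derivative 0) (at 0 within {0..L}) \<and>
                     ((u0s n) has_real_derivative 0) (at L within {0..L})"
    and u1s_bc: "\<forall>n. u1s n 0 = 0 \<and> u1s n L = 0"
    and u_sol: "\<forall>n. classical_solution L (\<Phi>s n) (u0s n) (u1s n) (u n)"
  shows "\<forall>T>0. \<exists>M. \<forall>n. \<forall>t\<in>{0<..<T}. \<forall>x\<in>{0<..<L}. \<bar>u n t x\<bar> \<le> M"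
proof (intro allI impI)
  fix T :: real assume "T > 0"
  obtain N :: nat where "(T + 2 * L) / (2 * L) \<le> real N"
    using real_arch_simple by blast
  hence N: "T + 2 * L \<le> real N * (2 * L)"
    using L_pos by (simp add: divide_le_eq)
  define E where "E = C\<^sup>2"
  have "\<bar>u n t x\<bar> \<le> (L + E) / (2 * L) + (L + E) / 2 + real N * (2 * (L + E)) + C * T * T"
    if "t \<in> {0<..<T}" "x \<in> {0<..<L}" for n t x
  proof -
    have "\<bar>u n t x\<bar> \<le> (L + E) / (2 * L) + (L + E) / 2 + real N * (2 * (L + E)) + C * t * t"
    proof (rule classical_solution_abs_le[OF L_pos _ u_sol[rule_format]])
      show "\<bar>deriv (\<Phi>s n) v\<bar> \<le> C" for v
        using dPhis_bound by blast
      show "(LINT y:{0<..<L}|lborel. (u0s n y)\<^sup>2 + (deriv (u0s n) y)\<^sup>2) \<le> E"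
        using u0s_bound sqrt_le_D unfolding H1_norm_smooth_def E_def by blast
      show "(LINT y:{0<..<L}|lborel. (u1s n y)\<^sup>2) \<le> E"
        using u1s_bound sqrt_le_D unfolding L2_norm_def E_def by blast
    qed (use that N in auto)
    moreover have "C * t * t \<le> C * T * T"
      using that C_pos by (simp add: mult_mono)
    ultimately show ?thesis by linarith
  qed
  thus "\<exists>M. \<forall>n. \<forall>t\<in>{0<..<T}. \<forall>x\<in>{0<..<L}. \<bar>u n t x\<bar> \<le> M"
    by blast
qed

end
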